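(* For every integer $m\ge0$ and $n\ge0$, $$\mathfrak D^{(m)}_{-1}(q;t_1,\dots,t_n)=[z^m]X-[z^{m+2}]X,\qquad X=\sum_{\vec\epsilon\in\{\pm1\}^n}\epsilon_1\cdots\epsilon_n\,\mathrm{tr}_{\mathcal F^{-1}}\big(z^{e_{11}}q^{L_0}\mathsf A(t_1^{\epsilon_1})\cdots\mathsf A(t_n^{\epsilon_n})\big),$$ where $[z^j]X$ is the coefficient of $z^j$ in $X$.
   Context: Let $\mathcal F^{-1}$ be the bosonic Fock space with basis $v=\gamma^+_{-r_1}\cdots\gamma^+_{-r_a}\gamma^-_{-s_1}\cdots\gamma^-_{-s_b}|0\rangle$ ($r_1\ge\cdots\ge r_a>0$, $s_1\ge\cdots\ge s_b>0$ in $\frac12+\mathbb Z$), $L_0v=(\sum r_i+\sum s_j)v$, $e_{11}v=(a-b)v$, and $\mathsf A(t)v=\big(\sum_it^{r_i}-\sum_jt^{-s_j}+\frac{1}{t^{-1/2}-t^{1/2}}\big)v$. The type $D$ Lie algebra $d_\infty$ acts on $\mathcal F^{-1}$ at level $-1$, with the operator $\mathsf D(t)$ acting as $\mathsf A(t)-\mathsf A(t^{-1})$; by a result of Wang there is a commuting $Sp(2)$-action (its torus element $\mathrm{diag}(z,z^{-1})$ acting as $z^{e_{11}}$), commuting with $L_0$, with $\mathcal F^{-1}\cong\bigoplus_{m\ge0}V_m(Sp(2))\otimes L_m$, $V_m$ the irreducible $(m+1)$-dimensional module and $L_m=\mathrm{Hom}_{Sp(2)}(V_m,\mathcal F^{-1})$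 the irreducible $d_\infty$-module $L(d_\infty;\Lambda(m),-1)$. Define $\mathfrak D^{(m)}_{-1}(q;t_1,\dots,t_n):=\mathrm{tr}_{L_m}\big(q^{L_0}\mathsf D(t_1)\cdots\mathsf D(t_n)\big)$. *)

theory Defs
  imports Complex_Main "HOL-Library.Multiset" "HOL-Library.Function_Algebras"
begin

text \<open>A label (M, P) encodes the
monomial vector  prod_{k in# M} gamma^+_{-(k+1/2)}  prod_{k in# P} gamma^-_{-(k+1/2)} |0>,
i.e. the multiset M (resp. P) records the modes r = k + 1/2 (resp. s = k + 1/2).\<close>

type_synonym label = "nat multiset \<times> nat multiset"

text \<open>Twice the L_0-eigenvalue (L_0 takes values in (1/2) N).\<close>
definition deg2 :: "label \<Rightarrow> nat" where
  "deg2 x = (\<Sum>k\<in>#fst x. 2*k+1) + (\<Sum>k\<in>#snd x. 2*k+1)"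

definition e11 :: "label \<Rightarrow> int" where
  "e11 x = int (size (fst x)) - int (size (snd x))"

text \<open>Eigenvalue of A(t) on a basis vector, with w = t^{1/2} (so t^r = w^{2r}).\<close>
definition Aval :: "complex \<Rightarrow> label \<Rightarrow> complex" where
  "Aval w x = (\<Sum>k\<in>#fst x. w ^ (2*k+1)) - (\<Sum>k\<in>#snd x. (inverse w) ^ (2*k+1))
              + 1 / (inverse w - w)"

text \<open>Eigenvalue of D(t) = A(t) - A(t^{-1}); the square root of t^{-1} is inverse w.\<close>
definition Dval :: "complex \<Rightarrow> label \<Rightarrow> complex" where
  "Dval w x = Aval w x - Aval (inverse w) x"

text \<open>Vectors of F^{-1} are coefficient functions on labels (finitely supported).
The raising operator of sp(2): e = sum_{r>0} gamma^+_{-r} gamma^+_r, where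
[gamma^+_r, gamma^-_{-r}] = 1 for r > 0.\<close>
definition raise_op :: "(label \<Rightarrow> complex) \<Rightarrow> (label \<Rightarrow> complex)" where
  "raise_op v y = (\<Sum>k\<in>set_mset (fst y).
      of_nat (count (snd y) k + 1) * v (fst y - {#k#}, add_mset k (snd y)))"

text \<open>Degree-(N2/2) part of L_m = Hom_{Sp(2)}(V_m, F^{-1}), realised as the space of
sp(2)-highest weight vectors of weight m.\<close>
definition Lspace :: "nat \<Rightarrow> nat \<Rightarrow> (label \<Rightarrow> complex) set" where
  "Lspace m N2 = {v. (\<forall>x. v x \<noteq> 0 \<longrightarrow> deg2 x = N2 \<and> e11 x = int m) \<and> raise_op v = 0}"

definition fscale :: "complex \<Rightarrow> ('a \<Rightarrow> complex) \<Rightarrow> ('a \<Rightarrow> complex)" where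
  "fscale c f = (\<lambda>x. c * f x)"

definition trace_on :: "('a \<Rightarrow> complex) set \<Rightarrow> (('a \<Rightarrow> complex) \<Rightarrow> ('a \<Rightarrow> complex)) \<Rightarrow> complex" where
  "trace_on U T = (let B = (SOME B. B \<subseteq> U \<and> \<not> module.dependent fscale B \<and> module.span fscale B = U)
     in \<Sum>b\<in>B. module.representation fscale B (T b) b)"

text \<open>The q-series D^{(m)}_{-1}(q; t_1..t_n) = tr_{L_m}(q^{L_0} D(t_1)...D(t_n)),
as the function N2 |-> coefficient of q^{N2/2}; ws = [t_1^{1/2}, ..., t_n^{1/2}].\<close>
definition frakD :: "nat \<Rightarrow> complex list \<Rightarrow> nat \<Rightarrow> complex" where
  "frakD m ws N2 = trace_on (Lspace m N2) (\<lambda>v x. (\<Prod>w\<leftarrow>ws. Dval w x) * v x)"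

definition signs :: "nat \<Rightarrow> int list set" where
  "signs n = {es. length es = n \<and> set es \<subseteq> {-1, 1}}"

text \<open>X = sum_eps eps_1..eps_n tr_F(z^{e11} q^{L0} A(t_1^{eps_1})...A(t_n^{eps_n})),
as the function (j, N2) |-> coefficient of z^j q^{N2/2}.  The trace of the diagonal
operator is the sum of its eigenvalues over the monomial basis.\<close>
definition Xcoeff :: "complex list \<Rightarrow> int \<Rightarrow> nat \<Rightarrow> complex" where
  "Xcoeff ws j N2 = (\<Sum>es\<in>signs (length ws). of_int (prod_list es) *
      (\<Sum>x\<in>{x. deg2 x = N2 \<and> e11 x = j}. \<Prod>i<length ws. Aval ((ws!i) powi (es!i)) x))"

end

theory Submission
  imports Defs
begin

text \<open>The operator D(t_1)...D(t_n) is diagonal in the monomial basis, with eigenvalue depending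
  only on the multiset of all modes; hence it commutes with the sp(2) operators e and f.  In the
  degree-N part of F^{-1}, let F_j be the e_11-weight-j space.  Then L_m is the kernel of e on F_m,
  and f maps F_{m+2} injectively onto a complement of it: injectivity and surjectivity of ef on
  F_{m+2} follow from ef = fe + h and the positivity of ef on a positive weight space.  Hence
  tr_{L_m} = tr_{F_m} - tr_{F_{m+2}}, each a sum of eigenvalues, and expanding the product of the
  D(t_i) = A(t_i) - A(t_i^{-1}) over sign vectors gives the coefficients of X.\<close>

section \<open>Traces on finite-dimensional spaces of functions\<close>

interpretation V: vector_space "fscale :: complex \<Rightarrow> ('a \<Rightarrow> complex) \<Rightarrow> ('a \<Rightarrow> complex)"
  by unfold_locales (auto simp: fscale_def fun_eq_iff algebra_simps)

lemma fscale_apply [simp]: "fscale c f x = c * f x"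
  by (simp add: fscale_def)

lemma sum_fun_apply: "(sum f A) x = (\<Sum>a\<in>A. f a x)"
  by (induction A rule: infinite_finite_induct) auto

lemma sum_insert_if:
  assumes "finite A"
  shows "sum f (insert k A) = f k + (\<Sum>l\<in>A. if l = k then 0 else f l)"
proof -
  have "(\<Sum>l\<in>A. if l = k then 0 else f l) = sum f (A - {k})"
    using assms by (simp add: sum.If_cases Diff_eq)
  then show ?thesis
    using assms by (simp add: sum.insert_remove)
qed

lemma module_hom_fscaleI:
  assumes "\<And>u v. f (u + v) = f u + f v" and "\<And>a u. f (fscale a u) = fscale a (f u)"
  shows "module_hom (fscale :: complex \<Rightarrow> _) (fscale :: complex \<Rightarrow> _) f"
  by (rule module_hom.intro, rule V.module_axioms, rule V.module_axioms, unfold_locales)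
     (use assms in auto)

lemma representation_linear_image:
  fixes T :: "('a \<Rightarrow> complex) \<Rightarrow> ('a \<Rightarrow> complex)"
  assumes T: "module_hom fscale fscale T"
    and B: "V.independent B" and C: "V.independent C" "finite C"
    and x: "x \<in> V.span C" and maps_to: "\<And>c. c \<in> C \<Longrightarrow> T c \<in> V.span B"
  shows "V.representation B (T x) b = (\<Sum>c\<in>C. V.representation C x c * V.representation B (T c) b)"
proof -
  have "T x = T (\<Sum>c\<in>C. fscale (V.representation C x c) c)"
    using V.sum_representation_eq[OF C(1) x C(2) order_refl] by simp
  also have "\<dots> = (\<Sum>c\<in>C. fscale (V.representation C x c) (T c))"
    by (simp add: module_hom.sum[OF T] module_hom.scale[OF T])
  finally show ?thesis
    by (simp add: V.representation_sum[OF B] V.span_scale maps_to V.representation_scale[OF B])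
qed

lemma trace_representation_basis_indep:
  fixes T :: "('a \<Rightarrow> complex) \<Rightarrow> ('a \<Rightarrow> complex)"
  assumes T: "module_hom fscale fscale T"
    and B: "V.independent B" "finite B" and C: "V.independent C" "finite C"
    and span_eq: "V.span B = V.span C"
    and invariant: "\<And>u. u \<in> V.span B \<Longrightarrow> T u \<in> V.span B"
  shows "(\<Sum>b\<in>B. V.representation B (T b) b) = (\<Sum>c\<in>C. V.representation C (T c) c)"
proof -
  have TC: "T c \<in> V.span B" if "c \<in> C" for c
    using invariant V.span_base[OF that] span_eq by simp
  have BC: "b \<in> V.span C" if "b \<in> B" for b
    using V.span_base[OF that] span_eq by simp
  have "(\<Sum>b\<in>B. V.representation B (T b) b)
      = (\<Sum>b\<in>B. \<Sum>c\<in>C. V.representation C b c * V.representation B (T c) b)"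
    using representation_linear_image[OF T B(1) C BC TC] by simp
  also have "\<dots> = (\<Sum>c\<in>C. \<Sum>b\<in>B. V.representation B (T c) b * V.representation C (id b) c)"
    by (subst sum.swap) (simp add: mult.commute)
  also have "\<dots> = (\<Sum>c\<in>C. V.representation C (id (T c)) c)"
  proof (rule sum.cong[OF refl])
    fix c assume "c \<in> C"
    have id: "module_hom fscale fscale (id :: ('a \<Rightarrow> complex) \<Rightarrow> _)"
      by (rule module_hom_fscaleI) simp_all
    show "(\<Sum>b\<in>B. V.representation B (T c) b * V.representation C (id b) c)
        = V.representation C (id (T c)) c"
      using representation_linear_image[OF id C(1) B TC[OF \<open>c \<in> C\<close>]] BC by simp
  qed
  finally show ?thesis by simp
qed

lemma trace_on_span_basis:
  fixes T :: "('a \<Rightarrow> complex) \<Rightarrow> ('a \<Rightarrow> complex)"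
  assumes T: "module_hom fscale fscale T" and B: "V.independent B" "finite B"
    and invariant: "\<And>u. u \<in> V.span B \<Longrightarrow> T u \<in> V.span B"
  shows "trace_on (V.span B) T = (\<Sum>b\<in>B. V.representation B (T b) b)"
proof -
  define C where "C = (SOME C. C \<subseteq> V.span B \<and> \<not> V.dependent C \<and> V.span C = V.span B)"
  have "C \<subseteq> V.span B \<and> \<not> V.dependent C \<and> V.span C = V.span B"
    unfolding C_def by (rule someI[of _ B]) (use B V.span_superset in auto)
  then have C: "V.independent C" "finite C" and span_eq: "V.span C = V.span B"
    using V.independent_span_bound[OF B(2)] by auto
  have "trace_on (V.span B) T = (\<Sum>c\<in>C. V.representation C (T c) c)"
    unfolding trace_on_def C_def[symmetric] Let_def ..
  also have "\<dots> = (\<Sum>b\<in>B. V.representation B (T b) b)"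
    using trace_representation_basis_indep[OF T C B span_eq] invariant span_eq by simp
  finally show ?thesis .
qed

lemma independent_Un_if_span_Int_zero:
  assumes A: "V.independent A" and B: "V.independent B"
    and span_Int: "V.span A \<inter> V.span B = {0}"
  shows "V.independent (A \<union> B)"
  unfolding V.independent_explicit_module
proof (intro allI impI)
  fix S u v
  assume S: "finite S" "S \<subseteq> A \<union> B" and zero: "(\<Sum>v\<in>S. fscale (u v) v) = 0" and v: "v \<in> S"
  define a where "a = (\<Sum>v\<in>S \<inter> A. fscale (u v) v)"
  define b where "b = (\<Sum>v\<in>S - A. fscale (u v) v)"
  have "a + b = (\<Sum>v\<in>S. fscale (u v) v)"
    unfolding a_def b_def by (rule sum.Int_Diff[OF S(1), symmetric])
  then have "a + b = 0"
    using zero by simp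
  have a_span: "a \<in> V.span A"
    unfolding a_def by (intro V.span_sum V.span_scale V.span_base) auto
  have b_span: "b \<in> V.span B"
    unfolding b_def using S(2) by (intro V.span_sum V.span_scale V.span_base) auto
  have "a = - b"
    using \<open>a + b = 0\<close> by (simp add: eq_neg_iff_add_eq_0)
  then have "a \<in> V.span A \<inter> V.span B"
    using a_span V.span_neg[OF b_span] by simp
  with span_Int have "a = 0" by blast
  with \<open>a + b = 0\<close> have "b = 0" by simp
  show "u v = 0"
  proof (cases "v \<in> A")
    case True
    show ?thesis
      by (rule V.independentD[OF A _ _ \<open>a = 0\<close>[unfolded a_def]]) (use S v True in auto)
  next
    case False
    show ?thesis
      by (rule V.independentD[OF B _ _ \<open>b = 0\<close>[unfolded b_def]]) (use S v False in auto)
  qed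
qed

lemma trace_on_span_Un:
  fixes T :: "('a \<Rightarrow> complex) \<Rightarrow> ('a \<Rightarrow> complex)"
  assumes T: "module_hom fscale fscale T"
    and B1: "V.independent B1" "finite B1" and B2: "V.independent B2" "finite B2"
    and span_Int: "V.span B1 \<inter> V.span B2 = {0}"
    and invariant1: "\<And>u. u \<in> V.span B1 \<Longrightarrow> T u \<in> V.span B1"
    and invariant2: "\<And>u. u \<in> V.span B2 \<Longrightarrow> T u \<in> V.span B2"
  shows "trace_on (V.span (B1 \<union> B2)) T = trace_on (V.span B1) T + trace_on (V.span B2) T"
proof -
  let ?B = "B1 \<union> B2"
  have indep: "V.independent ?B"
    by (rule independent_Un_if_span_Int_zero[OF B1(1) B2(1) span_Int])
  have disjoint: "B1 \<inter> B2 = {}"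
  proof (rule ccontr)
    assume "B1 \<inter> B2 \<noteq> {}"
    then obtain b where "b \<in> B1" "b \<in> B2" by blast
    then have "b = 0" using span_Int V.span_base[of b] by blast
    then show False using \<open>b \<in> B1\<close> V.dependent_zero B1(1) by blast
  qed
  have invariant: "T u \<in> V.span ?B" if "u \<in> V.span ?B" for u
  proof -
    have "u \<in> {u1 + u2 | u1 u2. u1 \<in> V.span B1 \<and> u2 \<in> V.span B2}"
      using that V.span_Un by blast
    then obtain u1 u2 where "u = u1 + u2" "u1 \<in> V.span B1" "u2 \<in> V.span B2"
      by blast
    then show ?thesis
      using invariant1 invariant2 V.span_mono[of B1 ?B] V.span_mono[of B2 ?B]
      by (auto simp: module_hom.add[OF T] intro!: V.span_add)
  qed
  have repr_restrict: "V.representation ?B (T b) b = V.representation B (T b) b"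
    if "b \<in> B" "B \<subseteq> ?B" "\<And>u. u \<in> V.span B \<Longrightarrow> T u \<in> V.span B" for b B
    using V.representation_extend[OF indep that(3)[OF V.span_base[OF that(1)]] that(2)] by simp
  have "trace_on (V.span ?B) T = (\<Sum>b\<in>?B. V.representation ?B (T b) b)"
    using trace_on_span_basis[OF T indep] B1(2) B2(2) invariant by simp
  also have "\<dots> = (\<Sum>b\<in>B1. V.representation B1 (T b) b) + (\<Sum>b\<in>B2. V.representation B2 (T b) b)"
    using repr_restrict[of _ B1] repr_restrict[of _ B2] invariant1 invariant2
    by (simp add: sum.union_disjoint[OF B1(2) B2(2) disjoint])
  also have "\<dots> = trace_on (V.span B1) T + trace_on (V.span B2) T"
    using trace_on_span_basis[OF T B1 invariant1] trace_on_span_basis[OF T B2 invariant2] by simp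
  finally show ?thesis .
qed

lemma trace_on_span_eigenbasis:
  fixes T :: "('a \<Rightarrow> complex) \<Rightarrow> ('a \<Rightarrow> complex)" and g :: "'b \<Rightarrow> 'a \<Rightarrow> complex"
  assumes T: "module_hom fscale fscale T" and S: "finite S" and inj: "inj_on g S"
    and indep: "V.independent (g ` S)"
    and eigen: "\<And>s. s \<in> S \<Longrightarrow> T (g s) = fscale (c s) (g s)"
  shows "trace_on (V.span (g ` S)) T = (\<Sum>s\<in>S. c s)"
proof -
  have "T (g s) \<in> V.span (g ` S)" if "s \<in> S" for s
    using eigen[OF that] V.span_scale[OF V.span_base[OF imageI[OF that]]] by simp
  then have "T ` g ` S \<subseteq> V.span (g ` S)"
    by blast
  then have "V.span (T ` g ` S) \<subseteq> V.span (g ` S)"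
    by (rule V.span_minimal[OF _ V.subspace_span])
  then have invariant: "T u \<in> V.span (g ` S)" if "u \<in> V.span (g ` S)" for u
    using that unfolding module_hom.span_image[OF T] by blast
  have "trace_on (V.span (g ` S)) T = (\<Sum>s\<in>S. V.representation (g ` S) (T (g s)) (g s))"
    using trace_on_span_basis[OF T indep _ invariant] S by (simp add: sum.reindex[OF inj])
  also have "\<dots> = (\<Sum>s\<in>S. c s)"
  proof (rule sum.cong[OF refl])
    fix s assume s: "s \<in> S"
    have gs: "g s \<in> g ` S" using s by (rule imageI)
    show "V.representation (g ` S) (T (g s)) (g s) = c s"
      using V.representation_scale[OF indep V.span_base[OF gs]] V.representation_basis[OF indep gs]
      by (simp add: eigen[OF s])
  qed
  finally show ?thesis .
qed

lemma finite_basis_exists: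
  assumes U: "V.subspace U" and S: "U \<subseteq> V.span S" "finite S"
  obtains B where "V.independent B" "finite B" "V.span B = U"
proof -
  obtain B where B: "B \<subseteq> U" "V.independent B" "U \<subseteq> V.span B"
    by (rule V.basis_exists)
  moreover have "finite B"
    using V.independent_span_bound[OF S(2) B(2)] B(1) S(1) by blast
  moreover have "V.span B = U"
    using V.span_minimal[OF B(1) U] B(3) by blast
  ultimately show ?thesis
    using that by blast
qed

lemma trace_on_direct_sum:
  fixes T :: "('a \<Rightarrow> complex) \<Rightarrow> ('a \<Rightarrow> complex)"
  assumes T: "module_hom fscale fscale T" and S: "finite S"
    and U: "V.subspace U" "U \<subseteq> V.span S" and W: "V.subspace W" "W \<subseteq> V.span S"
    and UW: "U \<inter> W = {0}" and TU: "T ` U \<subseteq> U" and TW: "T ` W \<subseteq> W"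
  shows "trace_on {u + w | u w. u \<in> U \<and> w \<in> W} T = trace_on U T + trace_on W T"
proof -
  obtain B1 where B1: "V.independent B1" "finite B1" "V.span B1 = U"
    using finite_basis_exists[OF U(1) U(2) S] .
  obtain B2 where B2: "V.independent B2" "finite B2" "V.span B2 = W"
    using finite_basis_exists[OF W(1) W(2) S] .
  have "{u + w | u w. u \<in> U \<and> w \<in> W} = V.span (B1 \<union> B2)"
    unfolding V.span_Un B1(3) B2(3) ..
  moreover have "trace_on (V.span (B1 \<union> B2)) T = trace_on (V.span B1) T + trace_on (V.span B2) T"
    by (rule trace_on_span_Un[OF T B1(1,2) B2(1,2)]) (use B1(3) B2(3) UW TU TW in blast)+
  ultimately show ?thesis
    using B1(3) B2(3) by simp
qed

lemma inj_on_span_imp_surj: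
  fixes T :: "('a \<Rightarrow> complex) \<Rightarrow> ('a \<Rightarrow> complex)"
  assumes T: "module_hom fscale fscale T" and B: "V.independent B" "finite B"
    and maps_to: "T ` V.span B \<subseteq> V.span B" and inj: "inj_on T (V.span B)"
  shows "T ` V.span B = V.span B"
proof -
  have indep: "V.independent (T ` B)"
    using module_hom.independent_injective_image[OF T B(1) inj] .
  have card: "card (T ` B) = card B"
    using card_image inj_on_subset[OF inj V.span_superset] by blast
  have "B \<subseteq> V.span (T ` B)"
  proof
    fix b assume b: "b \<in> B"
    show "b \<in> V.span (T ` B)"
    proof (rule ccontr)
      assume b_notin: "b \<notin> V.span (T ` B)"
      then have "V.independent (insert b (T ` B))"
        using V.independent_insertI indep by blast
      moreover have "insert b (T ` B) \<subseteq> V.span B"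
        using b maps_to V.span_base by blast
      ultimately have "card (insert b (T ` B)) \<le> card B"
        using V.independent_span_bound[OF B(2)] by blast
      moreover have "b \<notin> T ` B"
        using b_notin V.span_base by blast
      ultimately show False
        using card B(2) by simp
    qed
  qed
  then have "V.span B \<subseteq> V.span (T ` B)"
    by (rule V.span_minimal[OF _ V.subspace_span])
  then show ?thesis
    using maps_to unfolding module_hom.span_image[OF T] by blast
qed

definition supported :: "'a set \<Rightarrow> ('a \<Rightarrow> complex) set" where
  "supported Z = {v. \<forall>x. v x \<noteq> 0 \<longrightarrow> x \<in> Z}"

definition unit_vec :: "'a \<Rightarrow> 'a \<Rightarrow> complex" where
  "unit_vec x = (\<lambda>z. if z = x then 1 else 0)"

lemma subspace_supported: "V.subspace (supported Z)"
  unfolding V.subspace_def supported_def by (auto, metis add_0)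

lemma unit_vec_supported: "x \<in> Z \<Longrightarrow> unit_vec x \<in> supported Z"
  by (auto simp: supported_def unit_vec_def)

lemma inj_unit_vec: "inj unit_vec"
  by (rule injI) (metis unit_vec_def one_neq_zero)

lemma span_unit_vec:
  assumes "finite Z"
  shows "V.span (unit_vec ` Z) = supported Z"
proof
  show "V.span (unit_vec ` Z) \<subseteq> supported Z"
    by (rule V.span_minimal) (auto intro: unit_vec_supported subspace_supported)
  show "supported Z \<subseteq> V.span (unit_vec ` Z)"
  proof
    fix v assume v: "v \<in> supported Z"
    have "v = (\<Sum>x\<in>Z. fscale (v x) (unit_vec x))"
    proof
      fix y
      have "(\<Sum>x\<in>Z. fscale (v x) (unit_vec x)) y = (if y \<in> Z then v y else 0)"
        using assms by (simp add: sum_fun_apply unit_vec_def if_distrib[where f="\<lambda>t. _ * t"]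
            sum.delta' cong: if_cong)
      then show "v y = (\<Sum>x\<in>Z. fscale (v x) (unit_vec x)) y"
        using v by (auto simp: supported_def)
    qed
    also have "\<dots> \<in> V.span (unit_vec ` Z)"
      by (intro V.span_sum V.span_scale V.span_base) auto
    finally show "v \<in> V.span (unit_vec ` Z)" .
  qed
qed

lemma independent_unit_vec: "V.independent (unit_vec ` Z)"
  unfolding V.independent_explicit_module
proof (intro allI impI)
  fix S u v
  assume S: "finite S" "S \<subseteq> unit_vec ` Z" and zero: "(\<Sum>v\<in>S. fscale (u v) v) = 0" and v: "v \<in> S"
  obtain x where x: "v = unit_vec x" using S v by auto
  have "(\<Sum>w\<in>S. fscale (u w) w) x = (\<Sum>w\<in>S. if w = v then u w else 0)"
    unfolding sum_fun_apply
  proof (intro sum.cong refl)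
    fix w assume "w \<in> S"
    then obtain z where z: "w = unit_vec z" using S by auto
    have "w x = (if w = v then 1 else 0)"
    proof (cases "z = x")
      case False
      then have "w \<noteq> v" using x z inj_unit_vec by (metis injD)
      then show ?thesis using z False by (simp add: unit_vec_def)
    qed (simp add: x z unit_vec_def)
    then show "fscale (u w) w x = (if w = v then u w else 0)" by simp
  qed
  also have "\<dots> = u v" using v S(1) by simp
  finally show "u v = 0" using zero by simp
qed

section \<open>Weight spaces of the Fock space and the sp(2) action\<close>

definition weight_labels :: "nat \<Rightarrow> int \<Rightarrow> label set" where
  "weight_labels N j = {x. deg2 x = N \<and> e11 x = j}"

lemma size_le_sum_odd: "size M \<le> (\<Sum>k\<in>#M. 2*k+1::nat)"
  by (induction M) auto

lemma mem_le_sum_odd: "k \<in># M \<Longrightarrow> k \<le> (\<Sum>k\<in>#M. 2*k+1::nat)"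
  by (induction M) auto

lemma finite_deg2: "finite {x. deg2 x = N}"
proof -
  let ?A = "\<Union>n\<le>N. multisets_of_size {..N} n"
  have "{x. deg2 x = N} \<subseteq> ?A \<times> ?A"
  proof
    fix x assume "x \<in> {x. deg2 x = N}"
    then have "(\<Sum>k\<in>#fst x. 2*k+1::nat) \<le> N" "(\<Sum>k\<in>#snd x. 2*k+1::nat) \<le> N"
      by (auto simp: deg2_def)
    then have "fst x \<in> ?A" "snd x \<in> ?A"
      using size_le_sum_odd[of "fst x"] size_le_sum_odd[of "snd x"]
        mem_le_sum_odd[of _ "fst x"] mem_le_sum_odd[of _ "snd x"]
      by (force simp: multisets_of_size_def)+
    then show "x \<in> ?A \<times> ?A" by (simp add: mem_Times_iff)
  qed
  moreover have "finite (?A \<times> ?A)"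
    by auto
  ultimately show ?thesis
    by (rule finite_subset)
qed

lemma finite_weight_labels: "finite (weight_labels N j)"
  by (rule finite_subset[OF _ finite_deg2[of N]]) (auto simp: weight_labels_def)

lemma deg2_swap [simp]: "deg2 (prod.swap x) = deg2 x"
  by (simp add: deg2_def)

lemma e11_swap [simp]: "e11 (prod.swap x) = - e11 x"
  by (simp add: e11_def)

lemma deg2_move: "k \<in># M \<Longrightarrow> deg2 (M - {#k#}, add_mset k P) = deg2 (M, P)"
  by (auto simp: deg2_def dest!: multi_member_split)

lemma e11_move: "k \<in># M \<Longrightarrow> e11 (M - {#k#}, add_mset k P) = e11 (M, P) - 2"
  by (auto simp: e11_def dest!: multi_member_split)

text \<open>The lowering operator f of sp(2) is e with the roles of gamma^+ and gamma^- exchanged.\<close>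

definition lower_op :: "(label \<Rightarrow> complex) \<Rightarrow> (label \<Rightarrow> complex)" where
  "lower_op v = raise_op (v \<circ> prod.swap) \<circ> prod.swap"

lemma lower_op_apply:
  "lower_op v (M, P) = (\<Sum>k\<in>set_mset P. of_nat (count M k + 1) * v (add_mset k M, P - {#k#}))"
  by (simp add: lower_op_def raise_op_def)

lemma module_hom_raise_op: "module_hom fscale fscale raise_op"
  by (rule module_hom_fscaleI)
     (auto simp: raise_op_def fun_eq_iff sum.distrib distrib_left sum_distrib_left mult.left_commute)

lemma module_hom_lower_op: "module_hom fscale fscale lower_op"
proof (rule module_hom_fscaleI)
  fix u v :: "label \<Rightarrow> complex" and a :: complex
  have "(u + v) \<circ> prod.swap = (u \<circ> prod.swap) + (v \<circ> prod.swap)"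
    by (simp add: fun_eq_iff)
  then show "lower_op (u + v) = lower_op u + lower_op v"
    by (simp add: lower_op_def module_hom.add[OF module_hom_raise_op]) (simp add: fun_eq_iff)
  have "fscale a u \<circ> prod.swap = fscale a (u \<circ> prod.swap)"
    by (simp add: fun_eq_iff)
  then show "lower_op (fscale a u) = fscale a (lower_op u)"
    by (simp add: lower_op_def module_hom.scale[OF module_hom_raise_op]) (simp add: fun_eq_iff)
qed

lemma raise_op_supported:
  assumes "v \<in> supported (weight_labels N j)"
  shows "raise_op v \<in> supported (weight_labels N (j + 2))"
  unfolding supported_def
proof (intro CollectI allI impI)
  fix y assume "raise_op v y \<noteq> 0"
  then obtain k where k: "k \<in># fst y" and "v (fst y - {#k#}, add_mset k (snd y)) \<noteq> 0"
    unfolding raise_op_def by (auto elim: sum.not_neutral_contains_not_neutral)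
  then have "(fst y - {#k#}, add_mset k (snd y)) \<in> weight_labels N j"
    using assms by (auto simp: supported_def)
  then show "y \<in> weight_labels N (j + 2)"
    using deg2_move[OF k, of "snd y"] e11_move[OF k, of "snd y"] by (simp add: weight_labels_def)
qed

lemma comp_swap_supported:
  assumes "v \<in> supported (weight_labels N j)"
  shows "v \<circ> prod.swap \<in> supported (weight_labels N (- j))"
  unfolding supported_def
proof (intro CollectI allI impI)
  fix x assume "(v \<circ> prod.swap) x \<noteq> 0"
  then have "prod.swap x \<in> weight_labels N j"
    using assms unfolding supported_def comp_apply by blast
  then show "x \<in> weight_labels N (- j)"
    by (simp add: weight_labels_def)
qed

lemma lower_op_supported:
  assumes "v \<in> supported (weight_labels N j)"
  shows "lower_op v \<in> supported (weight_labels N (j - 2))"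
proof -
  have "- (- j + 2) = j - 2" by simp
  then show ?thesis
    using comp_swap_supported[OF raise_op_supported[OF comp_swap_supported[OF assms]]]
    by (simp only: lower_op_def)
qed

lemma lower_op_move_apply:
  assumes k: "k \<in># M"
  shows "lower_op v (M - {#k#}, add_mset k P) = of_nat (count M k) * v (M, P)
    + (\<Sum>l\<in>set_mset P. if l = k then 0
         else of_nat (count M l + 1) * v (add_mset l (M - {#k#}), add_mset k (P - {#l#})))"
proof -
  define F where "F l = of_nat (count (M - {#k#}) l + 1) * v (add_mset l (M - {#k#}), add_mset k P - {#l#})"
    for l
  have "count (M - {#k#}) k + 1 = count M k"
    using k by simp
  then have "F k = of_nat (count M k) * v (M, P)"
    unfolding F_def by (simp only: insert_DiffM[OF k] add_mset_remove_trivial)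
  moreover have "F l = of_nat (count M l + 1) * v (add_mset l (M - {#k#}), add_mset k (P - {#l#}))"
    if "l \<noteq> k" for l
    using that by (simp add: F_def Multiset.diff_add_mset_swap)
  moreover have "lower_op v (M - {#k#}, add_mset k P) = (\<Sum>l\<in>insert k (set_mset P). F l)"
    by (simp only: lower_op_apply F_def set_mset_add_mset_insert)
  ultimately show ?thesis
    by (simp add: sum_insert_if cong: if_cong)
qed

lemma raise_lower_apply:
  "raise_op (lower_op v) (M, P) =
     (\<Sum>k\<in>set_mset M. of_nat ((count P k + 1) * count M k)) * v (M, P)
   + (\<Sum>k\<in>set_mset M. \<Sum>l\<in>set_mset P. if l = k then 0
        else of_nat ((count P k + 1) * (count M l + 1))
               * v (add_mset l (M - {#k#}), add_mset k (P - {#l#})))"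
proof -
  have "raise_op (lower_op v) (M, P)
      = (\<Sum>k\<in>set_mset M. of_nat (count P k + 1) * lower_op v (M - {#k#}, add_mset k P))"
    by (simp add: raise_op_def)
  also have "\<dots> = (\<Sum>k\<in>set_mset M. of_nat ((count P k + 1) * count M k) * v (M, P)
      + (\<Sum>l\<in>set_mset P. if l = k then 0
          else of_nat ((count P k + 1) * (count M l + 1))
                 * v (add_mset l (M - {#k#}), add_mset k (P - {#l#}))))"
    by (intro sum.cong refl)
       (auto simp: lower_op_move_apply distrib_left sum_distrib_left algebra_simps intro!: sum.cong)
  finally show ?thesis
    by (simp add: sum.distrib flip: sum_distrib_right)
qed

lemma lower_raise_eq_swap: "lower_op (raise_op v) = raise_op (lower_op (v \<circ> prod.swap)) \<circ> prod.swap"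
  by (simp add: lower_op_def comp_def)

lemma sum_set_mset_count_mult_sym:
  "(\<Sum>k\<in>set_mset M. f (count M k) (count P k)) = (\<Sum>k\<in>set_mset P. f (count M k) (count P k))"
  if "\<And>a. f a 0 = 0" "\<And>b. f 0 b = (0 :: 'a :: comm_monoid_add)"
proof -
  have "(\<Sum>k\<in>set_mset M. f (count M k) (count P k)) = (\<Sum>k\<in>set_mset (M + P). f (count M k) (count P k))"
    by (rule sum.mono_neutral_left) (auto simp: that not_in_iff)
  also have "\<dots> = (\<Sum>k\<in>set_mset P. f (count M k) (count P k))"
    by (rule sum.mono_neutral_right) (auto simp: that not_in_iff)
  finally show ?thesis .
qed

text \<open>lower_op (raise_op v) is raise_op (lower_op (v o swap)) conjugated by the swap, so the
  off-diagonal terms of the two products coincide and only the diagonal terms survive.\<close>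

lemma raise_lower_commutator:
  "raise_op (lower_op v) x - lower_op (raise_op v) x = of_int (e11 x) * v x"
proof -
  obtain M P where x: "x = (M, P)" by (cases x)
  define cross where "cross = (\<Sum>k\<in>set_mset M. \<Sum>l\<in>set_mset P. if l = k then 0
        else of_nat ((count P k + 1) * (count M l + 1))
               * v (add_mset l (M - {#k#}), add_mset k (P - {#l#})))"
  have "lower_op (raise_op v) x =
      (\<Sum>k\<in>set_mset P. of_nat ((count M k + 1) * count P k)) * v (M, P) + cross"
  proof -
    have "lower_op (raise_op v) x = raise_op (lower_op (v \<circ> prod.swap)) (P, M)"
      by (simp add: lower_raise_eq_swap x)
    also have "\<dots> = (\<Sum>k\<in>set_mset P. of_nat ((count M k + 1) * count P k)) * v (M, P)
      + (\<Sum>k\<in>set_mset P. \<Sum>l\<in>set_mset M. if l = k then 0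
          else of_nat ((count M k + 1) * (count P l + 1))
                 * v (add_mset k (M - {#l#}), add_mset l (P - {#k#})))"
      by (simp add: raise_lower_apply comp_def cong: if_cong)
    also have "(\<Sum>k\<in>set_mset P. \<Sum>l\<in>set_mset M. if l = k then 0
          else of_nat ((count M k + 1) * (count P l + 1))
                 * v (add_mset k (M - {#l#}), add_mset l (P - {#k#}))) = cross"
      unfolding cross_def by (subst sum.swap) (auto intro!: sum.cong simp: mult.commute)
    finally show ?thesis .
  qed
  moreover have "raise_op (lower_op v) x =
      (\<Sum>k\<in>set_mset M. of_nat ((count P k + 1) * count M k)) * v (M, P) + cross"
    unfolding cross_def x by (rule raise_lower_apply)
  moreover have "(\<Sum>k\<in>set_mset M. of_nat ((count P k + 1) * count M k))
      - (\<Sum>k\<in>set_mset P. of_nat ((count M k + 1) * count P k)) = (of_int (e11 x) :: complex)"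
  proof -
    have "(\<Sum>k\<in>set_mset M. of_nat (count M k) * of_nat (count P k) :: complex)
        = (\<Sum>k\<in>set_mset P. of_nat (count M k) * of_nat (count P k))"
      by (rule sum_set_mset_count_mult_sym) simp_all
    moreover have "of_nat (size M) = (\<Sum>k\<in>set_mset M. of_nat (count M k) :: complex)"
      "of_nat (size P) = (\<Sum>k\<in>set_mset P. of_nat (count P k) :: complex)"
      by (simp_all add: size_multiset_overloaded_eq)
    ultimately show ?thesis
      by (simp add: x e11_def algebra_simps sum.distrib)
  qed
  ultimately show ?thesis
    by (simp add: x algebra_simps)
qed

section \<open>Positivity and the decomposition of weight spaces\<close>

text \<open>Products of factorials of the mode multiplicities, i.e. the squared norms of the
  monomial basis: with respect to the induced inner product lower_op is adjoint to raise_op.\<close>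

definition monomial_norm :: "label \<Rightarrow> real" where
  "monomial_norm x = (\<Prod>i\<in>set_mset (fst x + snd x). fact (count (fst x) i) * fact (count (snd x) i))"

definition fock_inner :: "label set \<Rightarrow> (label \<Rightarrow> complex) \<Rightarrow> (label \<Rightarrow> complex) \<Rightarrow> complex" where
  "fock_inner Z u v = (\<Sum>x\<in>Z. of_real (monomial_norm x) * u x * cnj (v x))"

lemma monomial_norm_pos: "monomial_norm x > 0"
  unfolding monomial_norm_def by (intro prod_pos) auto

lemma monomial_norm_move:
  assumes k: "k \<in># M"
  shows "monomial_norm (M, P) * (count P k + 1)
    = monomial_norm (M - {#k#}, add_mset k P) * (count (M - {#k#}) k + 1)"
proof -
  let ?S = "set_mset (M + P)"
  let ?rest = "\<lambda>M P. \<Prod>i\<in>?S - {k}. fact (count M i) * fact (count P i) :: real"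
  have S: "M - {#k#} + add_mset k P = M + P"
    using k by (simp add: insert_DiffM)
  have kS: "k \<in> ?S"
    using k by simp
  have rest: "?rest M P = ?rest (M - {#k#}) (add_mset k P)"
    by (intro prod.cong) auto
  have count_M: "count M k = Suc (count (M - {#k#}) k)"
    using k by simp
  have "monomial_norm (M, P) = fact (count M k) * fact (count P k) * ?rest M P"
    unfolding monomial_norm_def fst_conv snd_conv using kS by (simp add: prod.remove)
  moreover have "monomial_norm (M - {#k#}, add_mset k P)
      = fact (count (M - {#k#}) k) * fact (count P k + 1) * ?rest (M - {#k#}) (add_mset k P)"
    unfolding monomial_norm_def fst_conv snd_conv S using kS by (simp add: prod.remove)
  ultimately show ?thesis
    unfolding rest count_M by (simp add: algebra_simps)
qed

lemma fock_inner_cnj: "fock_inner Z u v = cnj (fock_inner Z v u)"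
  by (simp add: fock_inner_def mult.commute mult.left_commute)

lemma fock_inner_self: "fock_inner Z u u = of_real (\<Sum>x\<in>Z. monomial_norm x * (cmod (u x))\<^sup>2)"
  unfolding fock_inner_def of_real_sum
proof (intro sum.cong refl)
  fix x
  show "of_real (monomial_norm x) * u x * cnj (u x) = of_real (monomial_norm x * (cmod (u x))\<^sup>2)"
    by (simp only: complex_norm_square of_real_mult mult.assoc)
qed

lemma raise_lower_adjoint:
  "fock_inner (weight_labels N (j + 2)) (raise_op u) v = fock_inner (weight_labels N j) u (lower_op v)"
proof -
  let ?up = "\<lambda>(x, k). ((add_mset k (fst x), snd x - {#k#}), k)"
  let ?down = "\<lambda>(y, k). ((fst y - {#k#}, add_mset k (snd y)), k)"
  define G where "G = (\<lambda>(y, k). of_real (monomial_norm y) * of_nat (count (snd y) k + 1)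
      * u (fst y - {#k#}, add_mset k (snd y)) * cnj (v y))"
  define H where "H = (\<lambda>(x, k). of_real (monomial_norm x) * of_nat (count (fst x) k + 1)
      * u x * cnj (v (add_mset k (fst x), snd x - {#k#})))"
  have "fock_inner (weight_labels N (j + 2)) (raise_op u) v
      = (\<Sum>y\<in>weight_labels N (j + 2). \<Sum>k\<in>set_mset (fst y). G (y, k))"
    unfolding fock_inner_def raise_op_def G_def
    by (simp add: sum_distrib_left sum_distrib_right mult.assoc mult.left_commute)
  also have "\<dots> = sum G (SIGMA y:weight_labels N (j + 2). set_mset (fst y))"
    by (subst sum.Sigma) (auto simp: finite_weight_labels split_def)
  also have "\<dots> = sum H (SIGMA x:weight_labels N j. set_mset (snd x))"
  proof (rule sum.reindex_bij_witness[where i = ?up and j = ?down])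
    fix a assume a: "a \<in> (SIGMA y:weight_labels N (j + 2). set_mset (fst y))"
    obtain M P k where a_eq: "a = ((M, P), k)" by (metis prod.collapse)
    have k: "k \<in># M" and y: "(M, P) \<in> weight_labels N (j + 2)"
      using a a_eq by auto
    show "?up (?down a) = a"
      using k a_eq by (simp add: insert_DiffM)
    show "?down a \<in> (SIGMA x:weight_labels N j. set_mset (snd x))"
      using k y a_eq deg2_move[OF k, of P] e11_move[OF k, of P] by (auto simp: weight_labels_def)
    have "of_real (monomial_norm (M, P)) * of_nat (count P k + 1) = (of_real
        (monomial_norm (M - {#k#}, add_mset k P)) * of_nat (count (M - {#k#}) k + 1) :: complex)"
      using arg_cong[OF monomial_norm_move[OF k], of "of_real :: real \<Rightarrow> complex"] by simp
    then show "H (?down a) = G a"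
      using a_eq k by (simp add: G_def H_def insert_DiffM)
  next
    fix b assume b: "b \<in> (SIGMA x:weight_labels N j. set_mset (snd x))"
    obtain M P k where b_eq: "b = ((M, P), k)" by (metis prod.collapse)
    have k: "k \<in># P" and x: "(M, P) \<in> weight_labels N j"
      using b b_eq by auto
    have "M = add_mset k M - {#k#}" "add_mset k (P - {#k#}) = P"
      using k by (simp_all add: insert_DiffM)
    then show "?down (?up b) = b"
      using b_eq by simp
    show "?up b \<in> (SIGMA y:weight_labels N (j + 2). set_mset (fst y))"
      using x b_eq deg2_move[of k "add_mset k M" "P - {#k#}"] e11_move[of k "add_mset k M" "P - {#k#}"]
        \<open>add_mset k (P - {#k#}) = P\<close> by (auto simp: weight_labels_def)
  qed
  also have "\<dots> = (\<Sum>x\<in>weight_labels N j. \<Sum>k\<in>set_mset (snd x). H (x, k))"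
    by (subst sum.Sigma) (auto simp: finite_weight_labels split_def)
  also have "\<dots> = fock_inner (weight_labels N j) u (lower_op v)"
    unfolding fock_inner_def H_def
    by (simp add: lower_op_def raise_op_def sum_distrib_left mult.assoc mult.left_commute)
  finally show ?thesis .
qed

text \<open>On weight j the sl(2) identity ef = fe + h gives <ef w, w> = |e w|^2 + j |w|^2.\<close>

lemma fock_inner_raise_lower:
  "fock_inner (weight_labels N j) (raise_op (lower_op w)) w
     = of_real ((\<Sum>x\<in>weight_labels N (j + 2). monomial_norm x * (cmod (raise_op w x))\<^sup>2)
         + of_int j * (\<Sum>x\<in>weight_labels N j. monomial_norm x * (cmod (w x))\<^sup>2))"
proof -
  let ?Y = "weight_labels N j"
  have "raise_op (lower_op w) y = lower_op (raise_op w) y + of_int j * w y" if "y \<in> ?Y" for y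
    using raise_lower_commutator[of w y] that by (simp add: weight_labels_def algebra_simps)
  then have "fock_inner ?Y (raise_op (lower_op w)) w
      = fock_inner ?Y (lower_op (raise_op w)) w + of_int j * fock_inner ?Y w w"
    unfolding fock_inner_def by (simp add: sum.distrib sum_distrib_left algebra_simps)
  also have "fock_inner ?Y (lower_op (raise_op w)) w = cnj (fock_inner ?Y w (lower_op (raise_op w)))"
    by (rule fock_inner_cnj)
  also have "fock_inner ?Y w (lower_op (raise_op w))
      = fock_inner (weight_labels N (j + 2)) (raise_op w) (raise_op w)"
    by (rule raise_lower_adjoint[symmetric])
  finally show ?thesis
    unfolding fock_inner_self by simp
qed

lemma raise_lower_eq_0_imp_eq_0:
  assumes j: "j > 0" and w: "w \<in> supported (weight_labels N j)"
    and zero: "raise_op (lower_op w) = 0"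
  shows "w = 0"
proof -
  let ?Y = "weight_labels N j"
  define A where "A = (\<Sum>x\<in>weight_labels N (j + 2). monomial_norm x * (cmod (raise_op w x))\<^sup>2)"
  define B where "B = (\<Sum>x\<in>?Y. monomial_norm x * (cmod (w x))\<^sup>2)"
  have terms_nonneg: "monomial_norm x * (cmod (u x))\<^sup>2 \<ge> 0" for x and u :: "label \<Rightarrow> complex"
    using monomial_norm_pos[of x] by simp
  have "A \<ge> 0" "B \<ge> 0"
    unfolding A_def B_def using terms_nonneg by (simp_all add: sum_nonneg)
  have "(of_real (A + of_int j * B) :: complex) = 0"
    using fock_inner_raise_lower[of N j w] zero unfolding A_def B_def by (simp add: fock_inner_def)
  then have "A + of_int j * B = 0"
    by (simp only: of_real_eq_0_iff)
  moreover have "of_int j * B \<ge> 0"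
    using j \<open>B \<ge> 0\<close> by simp
  ultimately have "of_int j * B = 0"
    using \<open>A \<ge> 0\<close> by linarith
  then have "B = 0"
    using j by simp
  then have "monomial_norm x * (cmod (w x))\<^sup>2 = 0" if "x \<in> ?Y" for x
    using that sum_nonneg_eq_0_iff[OF finite_weight_labels, where f = "\<lambda>x. monomial_norm x * (cmod (w x))\<^sup>2"]
      terms_nonneg unfolding B_def by blast
  then have "w x = 0" if "x \<in> ?Y" for x
    using that monomial_norm_pos[of x] by fastforce
  then show "w = 0"
    using w by (auto simp: supported_def fun_eq_iff)
qed

lemma raise_lower_surj:
  assumes j: "j > 0"
  shows "(raise_op \<circ> lower_op) ` supported (weight_labels N j) = supported (weight_labels N j)"
proof -
  let ?B = "unit_vec ` weight_labels N j"
  have hom: "module_hom fscale fscale (raise_op \<circ> lower_op)"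
    by (rule module_hom_compose[OF module_hom_lower_op module_hom_raise_op])
  have span: "V.span ?B = supported (weight_labels N j)"
    by (rule span_unit_vec[OF finite_weight_labels])
  have "(raise_op \<circ> lower_op) ` V.span ?B \<subseteq> V.span ?B"
  proof (rule image_subsetI)
    fix w assume "w \<in> V.span ?B"
    then have "raise_op (lower_op w) \<in> supported (weight_labels N (j - 2 + 2))"
      unfolding span by (intro raise_op_supported lower_op_supported)
    then show "(raise_op \<circ> lower_op) w \<in> V.span ?B"
      unfolding span by simp
  qed
  moreover have "inj_on (raise_op \<circ> lower_op) (V.span ?B)"
    unfolding span module_hom.inj_on_iff_eq_0[OF hom subspace_supported] comp_apply
    using raise_lower_eq_0_imp_eq_0[OF j] by blast
  moreover have "finite ?B"
    using finite_weight_labels by (rule finite_imageI)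
  ultimately have "(raise_op \<circ> lower_op) ` V.span ?B = V.span ?B"
    by (intro inj_on_span_imp_surj[OF hom independent_unit_vec])
  then show ?thesis
    unfolding span .
qed

lemma Lspace_eq: "Lspace m N = {v \<in> supported (weight_labels N (int m)). raise_op v = 0}"
  unfolding Lspace_def supported_def weight_labels_def by auto

lemma subspace_Lspace: "V.subspace (Lspace m N)"
  unfolding Lspace_eq
  using V.subspace_inter[OF subspace_supported module_hom.subspace_kernel[OF module_hom_raise_op]]
  by (simp add: Int_def)

lemma Lspace_Int_lower_image:
  "Lspace m N \<inter> lower_op ` supported (weight_labels N (int m + 2)) = {0}"
proof
  show "Lspace m N \<inter> lower_op ` supported (weight_labels N (int m + 2)) \<subseteq> {0}"
  proof
    fix v assume "v \<in> Lspace m N \<inter> lower_op ` supported (weight_labels N (int m + 2))"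
    then obtain w where w: "w \<in> supported (weight_labels N (int m + 2))" and v: "v = lower_op w"
      and "raise_op (lower_op w) = 0"
      unfolding Lspace_eq by auto
    then have "w = 0"
      using raise_lower_eq_0_imp_eq_0[OF _ w] by simp
    then show "v \<in> {0}"
      using v module_hom.zero[OF module_hom_lower_op] by simp
  qed
  have "0 = lower_op 0" "0 \<in> supported (weight_labels N (int m + 2))"
    using module_hom.zero[OF module_hom_lower_op] V.subspace_0[OF subspace_supported] by simp_all
  then have "0 \<in> lower_op ` supported (weight_labels N (int m + 2))"
    by (rule image_eqI)
  then show "{0} \<subseteq> Lspace m N \<inter> lower_op ` supported (weight_labels N (int m + 2))"
    using V.subspace_0[OF subspace_Lspace] by simp
qed

lemma supported_eq_Lspace_plus_lower_image:
  "supported (weight_labels N (int m)) = {u + v | u v. u \<in> Lspace m N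
      \<and> v \<in> lower_op ` supported (weight_labels N (int m + 2))}"
proof safe
  fix v assume v: "v \<in> supported (weight_labels N (int m))"
  have surj: "(raise_op \<circ> lower_op) ` supported (weight_labels N (int m + 2))
      = supported (weight_labels N (int m + 2))"
    by (rule raise_lower_surj) simp
  have "raise_op v \<in> (raise_op \<circ> lower_op) ` supported (weight_labels N (int m + 2))"
    unfolding surj by (rule raise_op_supported[OF v])
  then obtain w where w: "w \<in> supported (weight_labels N (int m + 2))"
    and "raise_op v = (raise_op \<circ> lower_op) w"
    by (rule imageE)
  then have raise_eq: "raise_op (lower_op w) = raise_op v"
    by simp
  have lower_w: "lower_op w \<in> supported (weight_labels N (int m))"
    using lower_op_supported[OF w] by simp
  have "v - lower_op w \<in> Lspace m N"
    unfolding Lspace_eq using V.subspace_diff[OF subspace_supported v lower_w] raise_eq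
    by (simp add: module_hom.diff[OF module_hom_raise_op])
  then show "\<exists>u v'. v = u + v' \<and> u \<in> Lspace m N \<and> v' \<in> lower_op ` supported (weight_labels N (int m + 2))"
    using w by (intro exI[of _ "v - lower_op w"] exI[of _ "lower_op w"]) auto
next
  fix u w assume u: "u \<in> Lspace m N" and w: "w \<in> supported (weight_labels N (int m + 2))"
  have "u \<in> supported (weight_labels N (int m))"
    using u unfolding Lspace_eq by simp
  moreover have "lower_op w \<in> supported (weight_labels N (int m))"
    using lower_op_supported[OF w] by simp
  ultimately show "u + lower_op w \<in> supported (weight_labels N (int m))"
    by (rule V.subspace_add[OF subspace_supported])
qed

section \<open>Traces of mode multipliers\<close>

text \<open>D(t) acts as such a multiplier, and all of them commute with sp(2).\<close>

definition mode_multiplier :: "(nat multiset \<Rightarrow> complex) \<Rightarrow> label \<Rightarrow> complex" where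
  "mode_multiplier f x = f (fst x + snd x)"

lemma module_hom_times: "module_hom fscale fscale ((*) (c :: 'a \<Rightarrow> complex))"
  by (rule module_hom_fscaleI) (simp_all add: fun_eq_iff algebra_simps)

lemma times_supported: "v \<in> supported Z \<Longrightarrow> c * v \<in> supported Z"
  by (simp add: supported_def)

lemma raise_op_mode_multiplier: "raise_op (mode_multiplier f * v) = mode_multiplier f * raise_op v"
proof
  fix y :: label
  have "mode_multiplier f (fst y - {#k#}, add_mset k (snd y)) = mode_multiplier f y"
    if "k \<in># fst y" for k
    using that by (simp add: mode_multiplier_def)
  then show "raise_op (mode_multiplier f * v) y = (mode_multiplier f * raise_op v) y"
    by (simp add: raise_op_def sum_distrib_left mult.left_commute cong: sum.cong)
qed

lemma mode_multiplier_comp_swap: "mode_multiplier f \<circ> prod.swap = mode_multiplier f"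
  by (simp add: fun_eq_iff mode_multiplier_def add.commute)

lemma lower_op_mode_multiplier: "lower_op (mode_multiplier f * v) = mode_multiplier f * lower_op v"
proof -
  have "\<And>u. (mode_multiplier f * u) \<circ> prod.swap = mode_multiplier f * (u \<circ> prod.swap)"
    using mode_multiplier_comp_swap[of f] by (simp add: fun_eq_iff comp_def)
  then show ?thesis
    by (simp add: lower_op_def raise_op_mode_multiplier)
qed

lemma trace_supported_mode_multiplier:
  "trace_on (supported (weight_labels N j)) ((*) (mode_multiplier f))
     = (\<Sum>x\<in>weight_labels N j. mode_multiplier f x)"
proof -
  have "mode_multiplier f * unit_vec x = fscale (mode_multiplier f x) (unit_vec x)" for x
    by (simp add: fun_eq_iff unit_vec_def)
  then show ?thesis
    using trace_on_span_eigenbasis[OF module_hom_times finite_weight_labels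
        inj_on_subset[OF inj_unit_vec subset_UNIV] independent_unit_vec]
    by (simp add: span_unit_vec[OF finite_weight_labels])
qed

lemma trace_lower_image_mode_multiplier:
  assumes j: "j > 0"
  shows "trace_on (lower_op ` supported (weight_labels N j)) ((*) (mode_multiplier f))
     = (\<Sum>y\<in>weight_labels N j. mode_multiplier f y)"
proof -
  let ?Y = "weight_labels N j"
  have inj_lower: "inj_on lower_op (V.span (unit_vec ` ?Y))"
    unfolding span_unit_vec[OF finite_weight_labels]
      module_hom.inj_on_iff_eq_0[OF module_hom_lower_op subspace_supported]
    using raise_lower_eq_0_imp_eq_0[OF j] module_hom.zero[OF module_hom_raise_op] by metis
  have "V.independent (lower_op ` unit_vec ` ?Y)"
    by (rule module_hom.independent_injective_image[OF module_hom_lower_op independent_unit_vec inj_lower])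
  moreover have "inj_on (lower_op \<circ> unit_vec) ?Y"
    by (intro comp_inj_on inj_on_subset[OF inj_unit_vec subset_UNIV]
        inj_on_subset[OF inj_lower V.span_superset])
  moreover have "mode_multiplier f * (lower_op \<circ> unit_vec) y
      = fscale (mode_multiplier f y) ((lower_op \<circ> unit_vec) y)" for y
  proof -
    have "mode_multiplier f * unit_vec y = fscale (mode_multiplier f y) (unit_vec y)"
      by (simp add: fun_eq_iff unit_vec_def)
    then show ?thesis
      by (simp add: lower_op_mode_multiplier[symmetric] module_hom.scale[OF module_hom_lower_op])
  qed
  ultimately have "trace_on (V.span ((lower_op \<circ> unit_vec) ` ?Y)) ((*) (mode_multiplier f))
      = (\<Sum>y\<in>?Y. mode_multiplier f y)"
    by (intro trace_on_span_eigenbasis[OF module_hom_times finite_weight_labels])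
       (simp_all add: image_comp)
  moreover have "V.span ((lower_op \<circ> unit_vec) ` ?Y) = lower_op ` supported ?Y"
    unfolding image_comp[symmetric] module_hom.span_image[OF module_hom_lower_op]
      span_unit_vec[OF finite_weight_labels] ..
  ultimately show ?thesis
    by simp
qed

lemma trace_Lspace_mode_multiplier:
  "trace_on (Lspace m N) ((*) (mode_multiplier f))
     = (\<Sum>x\<in>weight_labels N (int m). mode_multiplier f x)
       - (\<Sum>x\<in>weight_labels N (int m + 2). mode_multiplier f x)"
proof -
  let ?T = "(*) (mode_multiplier f)"
  let ?X = "weight_labels N (int m)" and ?Y = "weight_labels N (int m + 2)"
  let ?W = "lower_op ` supported ?Y"
  have span_X: "V.span (unit_vec ` ?X) = supported ?X"
    by (rule span_unit_vec[OF finite_weight_labels])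
  have "Lspace m N \<subseteq> V.span (unit_vec ` ?X)" "?W \<subseteq> V.span (unit_vec ` ?X)"
    unfolding span_X using lower_op_supported[of _ N "int m + 2"] by (auto simp: Lspace_eq)
  moreover have "?T ` Lspace m N \<subseteq> Lspace m N"
    by (auto simp: Lspace_eq times_supported raise_op_mode_multiplier)
  moreover have "?T ` ?W \<subseteq> ?W"
    by (auto simp: lower_op_mode_multiplier[symmetric] times_supported)
  moreover have "V.subspace ?W"
    by (rule module_hom.subspace_image[OF module_hom_lower_op subspace_supported])
  ultimately have "trace_on (supported ?X) ?T = trace_on (Lspace m N) ?T + trace_on ?W ?T"
    unfolding supported_eq_Lspace_plus_lower_image
    by (intro trace_on_direct_sum[OF module_hom_times _ subspace_Lspace])
       (simp_all add: finite_weight_labels Lspace_Int_lower_image)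
  then show ?thesis
    by (simp add: trace_supported_mode_multiplier trace_lower_image_mode_multiplier)
qed

section \<open>Expansion over sign vectors\<close>

lemma Dval_eq_mode_multiplier: "Dval w = mode_multiplier (\<lambda>K. Dval w (K, {#}))"
  by (simp add: fun_eq_iff mode_multiplier_def Dval_def Aval_def algebra_simps)

lemma signs_Suc: "signs (Suc n) = (\<lambda>(e, es). e # es) ` ({-1, 1} \<times> signs n)"
proof
  show "signs (Suc n) \<subseteq> (\<lambda>(e, es). e # es) ` ({-1, 1} \<times> signs n)"
  proof
    fix xs assume "xs \<in> signs (Suc n)"
    then obtain e es where "xs = e # es" "length es = n" "e \<in> {-1, 1}" "set es \<subseteq> {-1, 1}"
      unfolding signs_def by (cases xs) auto
    then show "xs \<in> (\<lambda>(e, es). e # es) ` ({-1, 1} \<times> signs n)"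
      unfolding signs_def by force
  qed
  show "(\<lambda>(e, es). e # es) ` ({-1, 1} \<times> signs n) \<subseteq> signs (Suc n)"
    unfolding signs_def by auto
qed

lemma prod_list_diff_eq_sum_signs:
  fixes f :: "'a \<Rightarrow> int \<Rightarrow> 'b :: comm_ring_1"
  shows "(\<Prod>w\<leftarrow>ws. f w 1 - f w (-1)) =
    (\<Sum>es\<in>signs (length ws). of_int (prod_list es) * (\<Prod>i<length ws. f (ws ! i) (es ! i)))"
proof (induction ws)
  case Nil
  have "signs 0 = {[]}"
    by (auto simp: signs_def)
  then show ?case
    by simp
next
  case (Cons w ws)
  let ?n = "length ws"
  let ?S = "\<lambda>es. of_int (prod_list es) * (\<Prod>i<?n. f (ws ! i) (es ! i))"
  have inj: "inj_on (\<lambda>(e, es). e # es) ({-1, 1::int} \<times> signs ?n)"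
    by (auto simp: inj_on_def)
  have "(\<Sum>es\<in>signs (Suc ?n). of_int (prod_list es) * (\<Prod>i<Suc ?n. f ((w # ws) ! i) (es ! i)))
      = (\<Sum>(e, es)\<in>{-1, 1::int} \<times> signs ?n. of_int e * f w e * ?S es)"
    unfolding signs_Suc sum.reindex[OF inj]
    by (intro sum.cong refl) (auto simp: prod.lessThan_Suc_shift simp del: prod.lessThan_Suc)
  also have "\<dots> = (\<Sum>e\<in>{-1, 1::int}. \<Sum>es\<in>signs ?n. of_int e * f w e * ?S es)"
    by (rule sum.cartesian_product[symmetric])
  also have "\<dots> = (f w 1 - f w (-1)) * (\<Sum>es\<in>signs ?n. ?S es)"
    by (simp add: sum_distrib_left left_diff_distrib sum_subtractf mult.assoc sum_negf)
  finally show ?case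
    using Cons by simp
qed

lemma Xcoeff_eq: "Xcoeff ws j N = (\<Sum>x\<in>weight_labels N j. \<Prod>w\<leftarrow>ws. Dval w x)"
proof -
  have "(\<Prod>w\<leftarrow>ws. Dval w x) = (\<Sum>es\<in>signs (length ws).
      of_int (prod_list es) * (\<Prod>i<length ws. Aval ((ws ! i) powi (es ! i)) x))" for x
    using prod_list_diff_eq_sum_signs[of "\<lambda>w e. Aval (w powi e) x" ws] by (simp add: Dval_def)
  then show ?thesis
    unfolding Xcoeff_def weight_labels_def by (simp add: sum_distrib_left sum.swap[of _ _ "signs _"])
qed

theorem proposition4p2:
  fixes m :: nat and ws :: "complex list"
  assumes "\<forall>w\<in>set ws. w \<noteq> 0 \<and> w\<^sup>2 \<noteq> 1"
  shows "frakD m ws = (\<lambda>N2. Xcoeff ws (int m) N2 - Xcoeff ws (int m + 2) N2)"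
proof
  fix N2
  let ?D = "\<lambda>x. \<Prod>w\<leftarrow>ws. Dval w x"
  have D_eq: "?D = mode_multiplier (\<lambda>K. ?D (K, {#}))"
    by (subst Dval_eq_mode_multiplier) (simp add: mode_multiplier_def fun_eq_iff)
  have "(\<lambda>v x. ?D x * v x) = (*) (mode_multiplier (\<lambda>K. ?D (K, {#})))"
    unfolding D_eq[symmetric] by (simp add: fun_eq_iff)
  then have "frakD m ws N2 = trace_on (Lspace m N2) ((*) (mode_multiplier (\<lambda>K. ?D (K, {#}))))"
    by (simp add: frakD_def)
  also have "\<dots> = (\<Sum>x\<in>weight_labels N2 (int m). ?D x) - (\<Sum>x\<in>weight_labels N2 (int m + 2). ?D x)"
    using trace_Lspace_mode_multiplier[of m N2 "\<lambda>K. ?D (K, {#})"] unfolding D_eq[symmetric] .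
  finally show "frakD m ws N2 = Xcoeff ws (int m) N2 - Xcoeff ws (int m + 2) N2"
    by (simp add: Xcoeff_eq)
qed

end
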